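(* Let $P$ be a distribution on $\mathcal X\times\mathcal Y$ with every $\mathbf x\in\mathcal X\subseteq\mathbb R^d$ satisfying $\|\mathbf x\|\le1$ and $\mathcal Y=\{-1,+1\}$ or $[-1,1]$; let $(\mathbf x_i,y_i)_{i=1}^n$ be i.i.d. from $P$. Let $R>0$, $\mathscr W=\{\mathbf w:\|\mathbf w\|\le R\}$, $\ell:\mathbb R\to\mathbb R_+$ convex, $\alpha$-exp-concave on $|z|\le R$, $|\ell'|\le G$, $\mathcal L(\mathbf w)=\mathrm E[\ell(y\mathbf w^\top\mathbf x)]$, $\mathbf w_*\in\arg\min_{\mathscr W}\mathcal L$, $\mathbf H=\mathrm E[\mathbf x\mathbf x^\top]$. Let $\mathbf w_1,\dots,\mathbf w_n$ be the iterates of the algorithm in the context, $A=\sum_{i=1}^n\|\mathbf w_i-\mathbf w_*\|_{\mathbf H}^2$ and $\Delta_3=\sum_{i=1}^n\left(\left[(\mathbf w_i-\mathbf w_* )^\top\mathbf x_i\right]^2-\|\mathbf w_i-\mathbf w_*\|_{\mathbf H}^2\right)$. Then for any $t>0$, \[ \Pr\left(A\le\frac{4R^2}n\right)+\Pr\left(\Delta_3\le8R^2t+A\right)\ge1-me^{-t}, \] where $m=\lceil2\log_2n\rceil$.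
   Context: $\|\mathbf w\|_{\mathbf H}^2=\mathbf w^\top\mathbf H\mathbf w$. Algorithm with inputs $\eta_1>0$, $a>0$: $\mathbf w_1=\mathbf 0$, $\mathbf M_0=a\mathbf I$; for $i=1,\dots,n$: $\mathbf M_i=\mathbf M_{i-1}+\mathbf x_i\mathbf x_i^\top$, $\mathbf Z_i=\mathbf M_i/i$, $\mathbf v_i=\ell'(y_i\mathbf w_i^\top\mathbf x_i)\mathbf x_i$, $\eta_i=\eta_1/i$, $\mathbf w_{i+1}=\arg\min_{\mathbf w\in\mathscr W}\eta_i\langle\mathbf w,\mathbf v_i\rangle+\frac12(\mathbf w-\mathbf w_i)^\top\mathbf Z_i(\mathbf w-\mathbf w_i)$. *)

theory Defs
  imports "HOL-Probability.Probability"
begin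

definition Hnorm2 :: "real^'d^'d \<Rightarrow> real^'d \<Rightarrow> real" where
  "Hnorm2 H w = w \<bullet> (H *v w)"

definition outer :: "real^'d \<Rightarrow> real^'d^'d" where
  "outer x = (\<chi> j k. x$j * x$k)"

definition second_moment :: "((real^'d) \<times> real) measure \<Rightarrow> real^'d^'d" where
  "second_moment P = (\<chi> j k. \<integral> p. (fst p)$j * (fst p)$k \<partial>P)"

definition exp_loss :: "(real \<Rightarrow> real) \<Rightarrow> ((real^'d) \<times> real) measure \<Rightarrow> real^'d \<Rightarrow> real" where
  "exp_loss l P w = (\<integral> p. l (snd p * (w \<bullet> fst p)) \<partial>P)"

definition exp_concave_on :: "real \<Rightarrow> real set \<Rightarrow> (real \<Rightarrow> real) \<Rightarrow> bool" where
  "exp_concave_on \<alpha> S f \<longleftrightarrow> concave_on S (\<lambda>z. exp (- \<alpha> * f z))"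

text \<open>The matrix M_i = a I + sum_{j=1..i} x_j x_j^T, where the sample is
  \<omega> j = (x_j, y_j) for j = 1..n.\<close>
fun Mmat :: "real \<Rightarrow> (nat \<Rightarrow> (real^'d) \<times> real) \<Rightarrow> nat \<Rightarrow> real^'d^'d" where
  "Mmat a \<omega> 0 = a *\<^sub>R mat 1"
| "Mmat a \<omega> (Suc i) = Mmat a \<omega> i + outer (fst (\<omega> (Suc i)))"

definition ons_step :: "real \<Rightarrow> real \<Rightarrow> real \<Rightarrow> (real \<Rightarrow> real) \<Rightarrow>
    (nat \<Rightarrow> (real^'d) \<times> real) \<Rightarrow> nat \<Rightarrow> real^'d \<Rightarrow> real^'d" where
  "ons_step R \<eta>1 a l' \<omega> i wi =
     (let xi = fst (\<omega> i); yi = snd (\<omega> i);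
          vi = l' (yi * (wi \<bullet> xi)) *\<^sub>R xi;
          \<eta>i = \<eta>1 / real i;
          Zi = (1 / real i) *\<^sub>R Mmat a \<omega> i;
          obj = (\<lambda>w. \<eta>i * (w \<bullet> vi) + 1/2 * ((w - wi) \<bullet> (Zi *v (w - wi))))
      in SOME w'. norm w' \<le> R \<and> (\<forall>w. norm w \<le> R \<longrightarrow> obj w' \<le> obj w))"

text \<open>Iterates: ons_iter ... i = w_i for i \<ge> 1 (w_1 = 0); index 0 is unused.\<close>
fun ons_iter :: "real \<Rightarrow> real \<Rightarrow> real \<Rightarrow> (real \<Rightarrow> real) \<Rightarrow>
    (nat \<Rightarrow> (real^'d) \<times> real) \<Rightarrow> nat \<Rightarrow> real^'d" where
  "ons_iter R \<eta>1 a l' \<omega> 0 = 0"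
| "ons_iter R \<eta>1 a l' \<omega> (Suc i) =
     (if i = 0 then 0 else ons_step R \<eta>1 a l' \<omega> i (ons_iter R \<eta>1 a l' \<omega> i))"

end

theory Submission
  imports Defs
begin

text \<open>Write \<open>Y\<^sub>i = ((w\<^sub>i - w\<^sub>*)\<^sup>T x\<^sub>i)\<^sup>2\<close> and \<open>\<mu>\<^sub>i = \<parallel>w\<^sub>i - w\<^sub>*\<parallel>\<^sub>H\<^sup>2\<close>. The iterate \<open>w\<^sub>i\<close> depends only on
  the first \<open>i - 1\<close> samples and lies in the ball of radius R, so given the past, \<open>Y\<^sub>i\<close> has mean
  \<open>\<mu>\<^sub>i\<close> and values in \<open>[0, 4R\<^sup>2]\<close>. Since \<open>exp (s/2) \<le> 1 + s\<close> on \<open>[0, 1]\<close> and \<open>1 + x \<le> exp x\<close>,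
  the increments \<open>(Y\<^sub>i - 2\<mu>\<^sub>i) / (8R\<^sup>2)\<close> have conditional exponential moment at most one; by
  Tonelli on the product measure so does their sum \<open>(\<Delta>\<^sub>3 - A) / (8R\<^sup>2)\<close>, and Markov's inequality
  gives \<open>\<Delta>\<^sub>3 \<le> 8R\<^sup>2t + A\<close> with probability at least \<open>1 - e\<^sup>-\<^sup>t\<close>. This settles the case
  \<open>n \<ge> 2\<close>, where \<open>m \<ge> 1\<close>; for \<open>n \<le> 1\<close> the first event is certain. No property of the loss is
  needed beyond measurability of \<open>\<ell>'\<close>.

  The iterates are measurable because the minimiser of a strictly convex quadratic over a ball
  depends continuously on the data.\<close>

lemma inner_matrix_vector_eq_sum:
  "(x::real^'n) \<bullet> (Z *v y) = (\<Sum>j\<in>UNIV. \<Sum>k\<in>UNIV. x$j * Z$j$k * y$k)"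
  by (simp add: inner_vec_def matrix_vector_mult_def sum_distrib_left mult.assoc)

lemma inner_square_eq_sum: "((v::real^'n) \<bullet> x)\<^sup>2 = (\<Sum>j\<in>UNIV. \<Sum>k\<in>UNIV. (v$j * v$k) * (x$j * x$k))"
  by (simp add: power2_eq_square inner_vec_def sum_product algebra_simps)

lemma quadratic_form_midpoint:
  fixes Z :: "real^'n^'n"
  shows "((1/2) *\<^sub>R (u + v)) \<bullet> (Z *v ((1/2) *\<^sub>R (u + v)))
       = (u \<bullet> (Z *v u) + v \<bullet> (Z *v v)) / 2 - 1/4 * ((u - v) \<bullet> (Z *v (u - v)))"
  by (simp add: matrix_vector_mult_scaleR matrix_vector_right_distrib matrix_vector_mult_diff_distrib
      inner_add_left inner_add_right inner_diff_left inner_diff_right algebra_simps)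

lemma quadratic_form_outer: "v \<bullet> (outer x *v v) = (x \<bullet> v)\<^sup>2"
proof -
  have "v \<bullet> (outer x *v v) = (\<Sum>j\<in>UNIV. \<Sum>k\<in>UNIV. (x$j * v$j) * (x$k * v$k))"
    unfolding inner_matrix_vector_eq_sum outer_def by (simp add: algebra_simps)
  also have "\<dots> = (x \<bullet> v)\<^sup>2"
    by (simp add: power2_eq_square inner_vec_def sum_product)
  finally show ?thesis .
qed

section \<open>Minimising a quadratic over a ball\<close>

definition positive_definite :: "real^'n^'n \<Rightarrow> bool" where
  "positive_definite Z \<longleftrightarrow> (\<forall>v. v \<noteq> 0 \<longrightarrow> 0 < v \<bullet> (Z *v v))"

definition prox_obj :: "(real^'n) \<times> (real^'n) \<times> (real^'n^'n) \<Rightarrow> real^'n \<Rightarrow> real" where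
  "prox_obj p w = (case p of (c, w0, Z) \<Rightarrow> w \<bullet> c + 1/2 * ((w - w0) \<bullet> (Z *v (w - w0))))"

definition prox_argmin :: "real \<Rightarrow> (real^'n) \<times> (real^'n) \<times> (real^'n^'n) \<Rightarrow> real^'n" where
  "prox_argmin R p = (SOME w. norm w \<le> R \<and> (\<forall>v. norm v \<le> R \<longrightarrow> prox_obj p w \<le> prox_obj p v))"

lemma prox_obj_midpoint:
  "prox_obj (c, w0, Z) ((1/2) *\<^sub>R (u + v))
     = (prox_obj (c, w0, Z) u + prox_obj (c, w0, Z) v) / 2 - 1/8 * ((u - v) \<bullet> (Z *v (u - v)))"
proof -
  have mid: "(1/2) *\<^sub>R (u + v) - w0 = (1/2) *\<^sub>R ((u - w0) + (v - w0))"
    by (simp add: vec_eq_iff algebra_simps)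
  have lin: "((1/2) *\<^sub>R (u + v)) \<bullet> c = (u \<bullet> c + v \<bullet> c) / 2"
    by (simp add: inner_add_left)
  have diff: "(u - w0) - (v - w0) = u - v" by simp
  show ?thesis
    unfolding prox_obj_def prod.case mid lin quadratic_form_midpoint diff by (simp add: field_simps)
qed

lemma continuous_on_prox_obj:
  assumes "continuous_on S f" "continuous_on S g"
  shows "continuous_on S (\<lambda>x. prox_obj (f x) (g x))"
  unfolding prox_obj_def case_prod_beta inner_matrix_vector_eq_sum
  by (intro continuous_intros assms)

lemma prox_argmin_minimizes:
  assumes "R \<ge> 0"
  shows "norm (prox_argmin R p) \<le> R \<and> (\<forall>v. norm v \<le> R \<longrightarrow> prox_obj p (prox_argmin R p) \<le> prox_obj p v)"
proof -
  have "continuous_on (cball 0 R) (prox_obj p)"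
    by (intro continuous_on_prox_obj continuous_intros)
  then obtain w where "w \<in> cball 0 R" "\<forall>v\<in>cball 0 R. prox_obj p w \<le> prox_obj p v"
    using continuous_attains_inf[of "cball 0 R" "prox_obj p"] assms by auto
  then have "\<exists>w. norm w \<le> R \<and> (\<forall>v. norm v \<le> R \<longrightarrow> prox_obj p w \<le> prox_obj p v)"
    by auto
  then show ?thesis unfolding prox_argmin_def by (rule someI_ex)
qed

lemma norm_prox_argmin_le: "R \<ge> 0 \<Longrightarrow> norm (prox_argmin R p) \<le> R"
  using prox_argmin_minimizes by blast

lemma prox_obj_prox_argmin_le: "R \<ge> 0 \<Longrightarrow> norm v \<le> R \<Longrightarrow> prox_obj p (prox_argmin R p) \<le> prox_obj p v"
  using prox_argmin_minimizes by blast

lemma prox_argmin_unique: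
  assumes Z: "positive_definite Z" and w: "norm w \<le> R"
    and min: "\<And>v. norm v \<le> R \<Longrightarrow> prox_obj (c, w0, Z) w \<le> prox_obj (c, w0, Z) v"
  shows "w = prox_argmin R (c, w0, Z)"
proof (rule ccontr)
  let ?F = "prox_obj (c, w0, Z)"
  define g where "g = prox_argmin R (c, w0, Z)"
  assume "w \<noteq> prox_argmin R (c, w0, Z)"
  then have pos: "0 < (w - g) \<bullet> (Z *v (w - g))"
    using Z unfolding positive_definite_def g_def by simp
  have R: "R \<ge> 0" using w norm_ge_zero order_trans by blast
  have g: "norm g \<le> R" "?F g \<le> ?F w"
    unfolding g_def using norm_prox_argmin_le prox_obj_prox_argmin_le R w by auto
  have "norm ((1/2) *\<^sub>R (w + g)) \<le> R"
    using norm_triangle_ineq[of w g] w g by simp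
  then have "?F w \<le> ?F ((1/2) *\<^sub>R (w + g))" by (rule min)
  also have "\<dots> < ?F w"
    unfolding prox_obj_midpoint using min[OF g(1)] g(2) pos by simp
  finally show False by simp
qed

text \<open>On positive definite data the minimiser is unique, so its graph is closed; the codomain is
  compact, hence the minimiser is continuous there.\<close>
lemma continuous_on_prox_argmin:
  assumes R: "R \<ge> 0"
  shows "continuous_on (UNIV \<times> UNIV \<times> Collect positive_definite) (prox_argmin R :: _ \<Rightarrow> real^'n)"
proof -
  let ?D = "UNIV \<times> UNIV \<times> Collect positive_definite :: ((real^'n) \<times> (real^'n) \<times> (real^'n^'n)) set"
  let ?K = "cball (0::real^'n) R"
  define C where "C = (\<Inter>v\<in>?K. {x. prox_obj (fst x) (snd x) \<le> prox_obj (fst x) v})"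
  have "closed C" unfolding C_def
    by (intro closed_INT ballI closed_Collect_le continuous_on_prox_obj continuous_intros)
  have graph: "(\<lambda>p. (p, prox_argmin R p)) ` ?D = (?D \<times> ?K) \<inter> C"
  proof
    show "(\<lambda>p. (p, prox_argmin R p)) ` ?D \<subseteq> ?D \<times> ?K \<inter> C"
      unfolding C_def using norm_prox_argmin_le prox_obj_prox_argmin_le R by auto
    show "?D \<times> ?K \<inter> C \<subseteq> (\<lambda>p. (p, prox_argmin R p)) ` ?D"
    proof
      fix x assume x: "x \<in> ?D \<times> ?K \<inter> C"
      obtain c w0 Z w where x_eq: "x = ((c, w0, Z), w)" by (metis prod.collapse)
      have "w = prox_argmin R (c, w0, Z)"
        using x unfolding x_eq by (intro prox_argmin_unique) (auto simp: C_def)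
      then show "x \<in> (\<lambda>p. (p, prox_argmin R p)) ` ?D" using x unfolding x_eq by auto
    qed
  qed
  have "closedin (top_of_set (?D \<times> ?K)) ((\<lambda>p. (p, prox_argmin R p)) ` ?D)"
    unfolding graph using \<open>closed C\<close> by (intro closedin_closed_Int)
  moreover have "prox_argmin R \<in> ?D \<rightarrow> ?K" using norm_prox_argmin_le R by auto
  ultimately show ?thesis using continuous_closed_graph_eq[of ?K "prox_argmin R" ?D] by auto
qed

section \<open>The online Newton step iterates\<close>

definition ons_params :: "real \<Rightarrow> real \<Rightarrow> (real \<Rightarrow> real) \<Rightarrow> (nat \<Rightarrow> (real^'d) \<times> real) \<Rightarrow> nat
    \<Rightarrow> real^'d \<Rightarrow> (real^'d) \<times> (real^'d) \<times> (real^'d^'d)" where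
  "ons_params \<eta>1 a l' \<omega> i wi =
     ((\<eta>1 / real i) *\<^sub>R (l' (snd (\<omega> i) * (wi \<bullet> fst (\<omega> i))) *\<^sub>R fst (\<omega> i)),
      wi, (1 / real i) *\<^sub>R Mmat a \<omega> i)"

lemma ons_step_eq_prox_argmin:
  "ons_step R \<eta>1 a l' \<omega> i wi = prox_argmin R (ons_params \<eta>1 a l' \<omega> i wi)"
  unfolding ons_step_def prox_argmin_def prox_obj_def ons_params_def Let_def
  by (simp add: inner_scaleR_right mult.assoc)

lemma Mmat_quadratic_form_ge: "a * (v \<bullet> v) \<le> v \<bullet> (Mmat a \<omega> i *v v)"
proof (induction i)
  case 0
  then show ?case by (simp add: scaleR_matrix_vector_assoc[symmetric])
next
  case (Suc i)
  then show ?case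
    by (simp add: matrix_vector_mult_add_rdistrib inner_add_right quadratic_form_outer add_increasing2)
qed

lemma positive_definite_Mmat:
  fixes \<omega> :: "nat \<Rightarrow> (real^'d) \<times> real"
  assumes "a > 0" "c > 0"
  shows "positive_definite (c *\<^sub>R Mmat a \<omega> i)"
  unfolding positive_definite_def
proof (intro allI impI)
  fix v :: "real^'d" assume "v \<noteq> 0"
  then have "0 < a * (v \<bullet> v)" using assms by simp
  also have "\<dots> \<le> v \<bullet> (Mmat a \<omega> i *v v)" by (rule Mmat_quadratic_form_ge)
  finally show "0 < v \<bullet> ((c *\<^sub>R Mmat a \<omega> i) *v v)"
    using assms by (simp add: scaleR_matrix_vector_assoc[symmetric])
qed

lemma norm_ons_iter_le: "R \<ge> 0 \<Longrightarrow> norm (ons_iter R \<eta>1 a l' \<omega> i) \<le> R"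
  by (cases i) (auto simp: ons_step_eq_prox_argmin norm_prox_argmin_le)

lemma Mmat_cong: "(\<And>j. 1 \<le> j \<Longrightarrow> j \<le> i \<Longrightarrow> \<omega> j = \<omega>' j) \<Longrightarrow> Mmat a \<omega> i = Mmat a \<omega>' i"
  by (induction i) auto

lemma ons_iter_cong:
  "(\<And>j. 1 \<le> j \<Longrightarrow> j < i \<Longrightarrow> \<omega> j = \<omega>' j) \<Longrightarrow> ons_iter R \<eta>1 a l' \<omega> i = ons_iter R \<eta>1 a l' \<omega>' i"
proof (induction i)
  case (Suc i)
  then have "ons_iter R \<eta>1 a l' \<omega> i = ons_iter R \<eta>1 a l' \<omega>' i" by auto
  moreover have "Mmat a \<omega> i = Mmat a \<omega>' i" using Suc.prems by (intro Mmat_cong) auto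
  moreover have "i \<noteq> 0 \<Longrightarrow> \<omega> i = \<omega>' i" using Suc.prems by auto
  ultimately show ?case by (simp add: ons_step_def)
qed simp

section \<open>Exponential moments\<close>

lemma exp_half_le_one_plus:
  fixes s :: real
  assumes "0 \<le> s" "s \<le> 1"
  shows "exp (s / 2) \<le> 1 + s"
proof -
  have "exp (s / 2) \<le> 1 + s / 2 + (s / 2)\<^sup>2" using assms by (intro exp_bound) auto
  also have "\<dots> \<le> 1 + s"
    using assms mult_left_le[of s s] by (simp add: power2_eq_square field_simps)
  finally show ?thesis .
qed

lemma (in prob_space) nn_integral_exp_centered_le_1:
  assumes b: "b > 0" and f[measurable]: "f \<in> borel_measurable M"
    and bounded: "AE x in M. 0 \<le> f x \<and> f x \<le> b"
  shows "(\<integral>\<^sup>+ x. ennreal (exp (f x / (2 * b) - expectation f / b)) \<partial>M) \<le> 1"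
proof -
  let ?E = "expectation f"
  have int: "integrable M f"
  proof (rule integrable_const_bound[where B = b])
    show "AE x in M. norm (f x) \<le> b" using bounded by eventually_elim auto
  qed simp
  have "(\<integral>\<^sup>+ x. ennreal (exp (f x / (2 * b) - ?E / b)) \<partial>M)
      \<le> (\<integral>\<^sup>+ x. ennreal (exp (- ?E / b) * (1 + f x / b)) \<partial>M)"
  proof (rule nn_integral_mono_AE)
    show "AE x in M. ennreal (exp (f x / (2 * b) - ?E / b)) \<le> ennreal (exp (- ?E / b) * (1 + f x / b))"
      using bounded
    proof eventually_elim
      case (elim x)
      have "exp (f x / (2 * b) - ?E / b) = exp (- ?E / b) * exp ((f x / b) / 2)"
        by (simp add: exp_add[symmetric] field_simps)
      also have "\<dots> \<le> exp (- ?E / b) * (1 + f x / b)"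
        using elim b by (intro mult_left_mono exp_half_le_one_plus) auto
      finally show ?case by (rule ennreal_leI)
    qed
  qed
  also have "\<dots> = ennreal (\<integral>x. exp (- ?E / b) * (1 + f x / b) \<partial>M)"
    using int bounded b by (intro nn_integral_eq_integral) (auto elim!: eventually_mono)
  also have "(\<integral>x. exp (- ?E / b) * (1 + f x / b) \<partial>M) = exp (- ?E / b) * (1 + ?E / b)"
    using int by (simp add: prob_space)
  also have "\<dots> \<le> ennreal (exp (- ?E / b) * exp (?E / b))"
    by (intro ennreal_leI mult_left_mono exp_ge_add_one_self) auto
  also have "\<dots> = 1" by (simp add: exp_add[symmetric])
  finally show ?thesis .
qed

lemma nn_integral_exp_sum_PiM_le_1:
  fixes f :: "nat \<Rightarrow> (nat \<Rightarrow> 'a) \<Rightarrow> 'a \<Rightarrow> real"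
  assumes P: "prob_space P"
    and predictable: "\<And>i k \<omega> y. i \<le> k \<Longrightarrow> f i (fun_upd \<omega> k y) = f i \<omega>"
    and measurable_term:
      "\<And>i m. 1 \<le> i \<Longrightarrow> i \<le> m \<Longrightarrow> (\<lambda>\<omega>. f i \<omega> (\<omega> i)) \<in> borel_measurable (PiM {1..m} (\<lambda>_. P))"
    and measurable_increment: "\<And>i \<omega>. f i \<omega> \<in> borel_measurable P"
    and increment_le_1: "\<And>i \<omega>. (\<integral>\<^sup>+ y. ennreal (exp (f i \<omega> y)) \<partial>P) \<le> 1"
  shows "(\<integral>\<^sup>+ \<omega>. ennreal (exp (\<Sum>i=1..n. f i \<omega> (\<omega> i))) \<partial>PiM {1..n} (\<lambda>_. P)) \<le> 1"
proof (induction n)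
  case 0
  interpret prob_space "PiM {} (\<lambda>_. P)" by (rule prob_space_PiM) (rule P)
  show ?case by (simp add: emeasure_space_1)
next
  case (Suc n)
  interpret product_sigma_finite "\<lambda>_::nat. P"
    by (simp add: product_sigma_finite_def prob_space_imp_sigma_finite P)
  let ?S = "\<lambda>n \<omega>. \<Sum>i=1..n. f i \<omega> (\<omega> i)"
  have ins: "{1..Suc n} = insert (Suc n) {1..n}" by auto
  have [measurable]: "?S (Suc n) \<in> borel_measurable (PiM {1..Suc n} (\<lambda>_. P))"
    using measurable_term by (intro borel_measurable_sum) auto
  then have meas: "(\<lambda>\<omega>. ennreal (exp (?S (Suc n) \<omega>))) \<in> borel_measurable (PiM {1..Suc n} (\<lambda>_. P))"
    by measurable
  have split: "?S (Suc n) (fun_upd \<omega> (Suc n) y) = ?S n \<omega> + f (Suc n) \<omega> y" for \<omega> y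
  proof -
    have "?S n (fun_upd \<omega> (Suc n) y) = ?S n \<omega>" using predictable by (intro sum.cong) auto
    then show ?thesis using predictable[of "Suc n" "Suc n"] by simp
  qed
  have "(\<integral>\<^sup>+ \<omega>. ennreal (exp (?S (Suc n) \<omega>)) \<partial>PiM {1..Suc n} (\<lambda>_. P))
      = (\<integral>\<^sup>+ \<omega>. (\<integral>\<^sup>+ y. ennreal (exp (?S (Suc n) (fun_upd \<omega> (Suc n) y))) \<partial>P) \<partial>PiM {1..n} (\<lambda>_. P))"
    using product_nn_integral_insert[of "{1..n}" "Suc n" "\<lambda>\<omega>. ennreal (exp (?S (Suc n) \<omega>))"] meas
    unfolding ins by simp
  also have "\<dots> \<le> (\<integral>\<^sup>+ \<omega>. ennreal (exp (?S n \<omega>)) \<partial>PiM {1..n} (\<lambda>_. P))"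
  proof (rule nn_integral_mono)
    fix \<omega>
    have "(\<integral>\<^sup>+ y. ennreal (exp (?S (Suc n) (fun_upd \<omega> (Suc n) y))) \<partial>P)
        = ennreal (exp (?S n \<omega>)) * (\<integral>\<^sup>+ y. ennreal (exp (f (Suc n) \<omega> y)) \<partial>P)"
      unfolding split exp_add ennreal_mult[OF exp_ge_zero exp_ge_zero]
      by (rule nn_integral_cmult) (use measurable_increment in measurable)
    also have "\<dots> \<le> ennreal (exp (?S n \<omega>))"
      using mult_left_mono[OF increment_le_1, of "ennreal (exp (?S n \<omega>))"] by simp
    finally show "(\<integral>\<^sup>+ y. ennreal (exp (?S (Suc n) (fun_upd \<omega> (Suc n) y))) \<partial>P) \<le> ennreal (exp (?S n \<omega>))" .
  qed
  also have "\<dots> \<le> 1" by (rule Suc.IH)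
  finally show ?case .
qed

lemma (in prob_space) prob_ge_le_exp_neg:
  assumes [measurable]: "f \<in> borel_measurable M"
    and exp_moment: "(\<integral>\<^sup>+ x. ennreal (exp (f x)) \<partial>M) \<le> 1"
  shows "prob {x \<in> space M. t \<le> f x} \<le> exp (- t)"
proof -
  have "emeasure M {x \<in> space M. f x \<ge> t}
      \<le> ennreal (exp (- 1 * t)) * (\<integral>\<^sup>+ x. ennreal (exp (1 * f x)) * indicator (space M) x \<partial>M)"
    by (intro Chernoff_ineq_nn_integral_ge) auto
  also have "(\<integral>\<^sup>+ x. ennreal (exp (1 * f x)) * indicator (space M) x \<partial>M) = (\<integral>\<^sup>+ x. ennreal (exp (f x)) \<partial>M)"
    by (intro nn_integral_cong) simp
  finally have "emeasure M {x \<in> space M. t \<le> f x} \<le> ennreal (exp (- t))"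
    using exp_moment mult_left_mono[OF exp_moment, of "ennreal (exp (- t))"] by simp
  then show ?thesis by (simp add: emeasure_eq_measure)
qed

lemma borel_measurable_derivative:
  fixes f f' :: "real \<Rightarrow> real"
  assumes f: "\<And>x. (f has_real_derivative f' x) (at x)"
  shows "f' \<in> borel_measurable borel"
proof -
  have cont: "continuous_on UNIV f"
    using f by (meson DERIV_isCont continuous_at_imp_continuous_on)
  define h where "h = (\<lambda>n::nat. inverse (real (Suc n)))"
  show ?thesis
  proof (rule borel_measurable_LIMSEQ_real[where u="\<lambda>n x. (f (x + h n) - f x) / h n"])
    fix n
    show "(\<lambda>x. (f (x + h n) - f x) / h n) \<in> borel_measurable borel"
      by (intro borel_measurable_divide borel_measurable_diff borel_measurable_const
          measurable_compose[OF _ borel_measurable_continuous_onI[OF cont]] borel_measurable_add)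
         (auto intro: borel_measurable_continuous_onI[OF cont])
  next
    fix x :: real
    have quotient: "((\<lambda>y. (f y - f x) / (y - x)) \<longlongrightarrow> f' x) (at x)"
      using f has_field_derivative_iff by blast
    have "filterlim (\<lambda>n. x + h n) (at x) sequentially"
    proof (rule filterlim_atI)
      show "((\<lambda>n. x + h n) \<longlongrightarrow> x) sequentially"
        using tendsto_add[OF tendsto_const LIMSEQ_inverse_real_of_nat, of x] by (simp add: h_def)
      show "\<forall>\<^sub>F n in sequentially. x + h n \<noteq> x" by (simp add: h_def)
    qed
    from filterlim_compose[OF quotient this]
    show "(\<lambda>n. (f (x + h n) - f x) / h n) \<longlonglongrightarrow> f' x" by (simp add: comp_def)
  qed
qed

locale unit_ball_distribution = prob_space P
  for P :: "((real^'d) \<times> real) measure" +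
  assumes sets_P: "sets P = sets borel"
    and norm_fst_le_1: "AE p in P. norm (fst p) \<le> 1"
begin

lemma borel_measurable_P_iff: "g \<in> borel_measurable P \<longleftrightarrow> g \<in> borel_measurable borel"
  by (simp add: measurable_cong_sets[OF sets_P refl])

lemma borel_measurable_coordinate:
  assumes "j \<in> I" and "g \<in> borel_measurable borel"
  shows "(\<lambda>\<omega>. g (\<omega> j)) \<in> borel_measurable (PiM I (\<lambda>_. P))"
proof (rule measurable_compose[OF measurable_component_singleton[OF assms(1)]])
  show "g \<in> borel_measurable P" using assms(2) by (simp add: borel_measurable_P_iff)
qed

lemma Mmat_measurable: "{1..i} \<subseteq> I \<Longrightarrow> (\<lambda>\<omega>. Mmat a \<omega> i) \<in> borel_measurable (PiM I (\<lambda>_. P))"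
proof (induction i)
  case (Suc i)
  have "(\<lambda>x. outer (fst x)) \<in> borel_measurable (borel :: ((real^'d) \<times> real) measure)"
    unfolding outer_def by (intro borel_measurable_continuous_onI continuous_intros)
  then have "(\<lambda>\<omega>. outer (fst (\<omega> (Suc i)))) \<in> borel_measurable (PiM I (\<lambda>_. P))"
    using Suc.prems by (intro borel_measurable_coordinate) auto
  moreover have "(\<lambda>\<omega>. Mmat a \<omega> i) \<in> borel_measurable (PiM I (\<lambda>_. P))"
    using Suc.IH order_trans[OF _ Suc.prems, of "{1..i}"] by auto
  ultimately show ?case by (simp add: borel_measurable_add)
qed simp

lemma ons_iter_measurable:
  assumes R: "R \<ge> 0" and a: "a > 0" and l': "l' \<in> borel_measurable borel"
  shows "{1..<i} \<subseteq> I \<Longrightarrow> (\<lambda>\<omega>. ons_iter R \<eta>1 a l' \<omega> i) \<in> borel_measurable (PiM I (\<lambda>_. P))"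
proof (induction i)
  case (Suc i)
  show ?case
  proof (cases "i = 0")
    case False
    let ?Q = "PiM I (\<lambda>_. P)"
    let ?w = "\<lambda>\<omega>. ons_iter R \<eta>1 a l' \<omega> i"
    let ?D = "UNIV \<times> UNIV \<times> Collect positive_definite :: ((real^'d) \<times> (real^'d) \<times> (real^'d^'d)) set"
    have i: "i \<in> I" "{1..i} \<subseteq> I" using False Suc.prems by auto
    have [measurable]: "?w \<in> borel_measurable ?Q"
      using Suc.IH order_trans[OF _ Suc.prems, of "{1..<i}"] by auto
    have [measurable]: "(\<lambda>\<omega>. Mmat a \<omega> i) \<in> borel_measurable ?Q"
      using i(2) by (rule Mmat_measurable)
    have [measurable]: "(\<lambda>\<omega>. fst (\<omega> i)) \<in> borel_measurable ?Q" "(\<lambda>\<omega>. snd (\<omega> i)) \<in> borel_measurable ?Q"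
      by (intro borel_measurable_coordinate i borel_measurable_continuous_onI continuous_intros)+
    have "(\<lambda>\<omega>. l' (snd (\<omega> i) * (?w \<omega> \<bullet> fst (\<omega> i)))) \<in> borel_measurable ?Q"
      by (rule measurable_compose[OF _ l']) measurable
    then have "(\<lambda>\<omega>. ons_params \<eta>1 a l' \<omega> i (?w \<omega>)) \<in> borel_measurable ?Q"
      unfolding ons_params_def by measurable
    then have "(\<lambda>\<omega>. ons_params \<eta>1 a l' \<omega> i (?w \<omega>)) \<in> measurable ?Q (restrict_space borel ?D)"
      using False a by (intro measurable_restrict_space2) (auto simp: ons_params_def positive_definite_Mmat)
    from measurable_comp[OF this borel_measurable_continuous_on_restrict[OF continuous_on_prox_argmin[OF R]]]
    show ?thesis using False by (simp add: ons_step_eq_prox_argmin comp_def)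
  qed simp
qed simp

lemma integrable_fst_nth_mult: "integrable P (\<lambda>p. fst p $ j * fst p $ k)"
proof (rule integrable_const_bound[where B = 1])
  show "AE p in P. norm (fst p $ j * fst p $ k) \<le> 1"
    using norm_fst_le_1
  proof eventually_elim
    case (elim p)
    have "\<bar>fst p $ j\<bar> \<le> 1" "\<bar>fst p $ k\<bar> \<le> 1"
      using component_le_norm_cart[of "fst p"] elim by (meson order_trans)+
    then show ?case by (simp add: abs_mult mult_le_one)
  qed
  show "(\<lambda>p. fst p $ j * fst p $ k) \<in> borel_measurable P"
    unfolding borel_measurable_P_iff by (intro borel_measurable_continuous_onI continuous_intros)
qed

lemma integrable_inner_fst_square: "integrable P (\<lambda>p. (v \<bullet> fst p)\<^sup>2)"
  unfolding inner_square_eq_sum by (simp add: integrable_fst_nth_mult)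

lemma Hnorm2_second_moment: "Hnorm2 (second_moment P) v = expectation (\<lambda>p. (v \<bullet> fst p)\<^sup>2)"
proof -
  have "Hnorm2 (second_moment P) v
      = (\<Sum>j\<in>UNIV. \<Sum>k\<in>UNIV. (v$j * v$k) * (\<integral>p. fst p $ j * fst p $ k \<partial>P))"
    unfolding Hnorm2_def inner_matrix_vector_eq_sum second_moment_def by (simp add: algebra_simps)
  also have "\<dots> = expectation (\<lambda>p. (v \<bullet> fst p)\<^sup>2)"
    unfolding inner_square_eq_sum by (simp add: integrable_fst_nth_mult)
  finally show ?thesis .
qed

lemma Hnorm2_second_moment_le: "Hnorm2 (second_moment P) v \<le> (norm v)\<^sup>2"
proof -
  have "expectation (\<lambda>p. (v \<bullet> fst p)\<^sup>2) \<le> expectation (\<lambda>p. (norm v)\<^sup>2)"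
  proof (rule integral_mono_AE[OF integrable_inner_fst_square])
    show "AE p in P. (v \<bullet> fst p)\<^sup>2 \<le> (norm v)\<^sup>2"
      using norm_fst_le_1
    proof eventually_elim
      case (elim p)
      have "\<bar>v \<bullet> fst p\<bar> \<le> norm v * norm (fst p)" by (rule Cauchy_Schwarz_ineq2)
      also have "\<dots> \<le> norm v" using elim by (simp add: mult_left_le)
      finally show ?case by (metis abs_le_square_iff abs_norm_cancel)
    qed
  qed simp
  then show ?thesis by (simp add: Hnorm2_second_moment prob_space)
qed


lemma nn_integral_exp_quadratic_deviation_le_1:
  assumes r: "r > 0" and u: "norm u \<le> r"
  shows "(\<integral>\<^sup>+ p. ennreal (exp ((u \<bullet> fst p)\<^sup>2 / (2 * r\<^sup>2) - Hnorm2 (second_moment P) u / r\<^sup>2)) \<partial>P) \<le> 1"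
proof -
  have "AE p in P. 0 \<le> (u \<bullet> fst p)\<^sup>2 \<and> (u \<bullet> fst p)\<^sup>2 \<le> r\<^sup>2"
    using norm_fst_le_1
  proof eventually_elim
    case (elim p)
    have "\<bar>u \<bullet> fst p\<bar> \<le> norm u * norm (fst p)" by (rule Cauchy_Schwarz_ineq2)
    also have "\<dots> \<le> r" using elim u r by (metis mult_left_le norm_ge_zero order_trans)
    finally show ?case using r by (simp add: abs_le_square_iff[symmetric])
  qed
  moreover have "(\<lambda>p. (u \<bullet> fst p)\<^sup>2) \<in> borel_measurable P"
    unfolding borel_measurable_P_iff by (intro borel_measurable_continuous_onI continuous_intros)
  ultimately show ?thesis
    using nn_integral_exp_centered_le_1[of "r\<^sup>2"] r by (simp add: Hnorm2_second_moment)
qed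

context
  fixes R \<eta>1 a :: real and l' :: "real \<Rightarrow> real" and ws :: "real^'d"
  assumes R: "R > 0" and a: "a > 0" and l': "l' \<in> borel_measurable borel"
    and ws: "norm ws \<le> R"
begin

text \<open>The scaling is chosen so that the increments sum to \<open>(\<Delta>\<^sub>3 - A) / (8R\<^sup>2)\<close>.\<close>
definition ons_increment :: "(nat \<Rightarrow> (real^'d) \<times> real) \<Rightarrow> nat \<Rightarrow> (real^'d) \<times> real \<Rightarrow> real" where
  "ons_increment \<omega> i p =
     ((ons_iter R \<eta>1 a l' \<omega> i - ws) \<bullet> fst p)\<^sup>2 / (2 * (2 * R)\<^sup>2)
     - Hnorm2 (second_moment P) (ons_iter R \<eta>1 a l' \<omega> i - ws) / (2 * R)\<^sup>2"

lemma ons_increment_measurable: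
  assumes "i \<in> I" "{1..<i} \<subseteq> I"
  shows "(\<lambda>\<omega>. ons_increment \<omega> i (\<omega> i)) \<in> borel_measurable (PiM I (\<lambda>_. P))"
proof -
  have [measurable]: "(\<lambda>\<omega>. ons_iter R \<eta>1 a l' \<omega> i) \<in> borel_measurable (PiM I (\<lambda>_. P))"
    using R a l' assms(2) by (intro ons_iter_measurable) auto
  have [measurable]: "(\<lambda>\<omega>. fst (\<omega> i)) \<in> borel_measurable (PiM I (\<lambda>_. P))"
    by (intro borel_measurable_coordinate assms(1) borel_measurable_continuous_onI continuous_intros)
  have [measurable]: "Hnorm2 (second_moment P) \<in> borel_measurable borel"
    unfolding Hnorm2_def by (intro borel_measurable_continuous_onI continuous_intros)
  show ?thesis unfolding ons_increment_def by measurable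
qed

text \<open>Both the iterate and the comparator lie in the ball of radius R, so each centred
  increment is driven by a vector of norm at most 2R.\<close>
lemma nn_integral_exp_sum_ons_increment_le_1:
  "(\<integral>\<^sup>+ \<omega>. ennreal (exp (\<Sum>i=1..n. ons_increment \<omega> i (\<omega> i))) \<partial>PiM {1..n} (\<lambda>_. P)) \<le> 1"
proof (rule nn_integral_exp_sum_PiM_le_1)
  show "prob_space P" by (rule prob_space_axioms)
  show "ons_increment (fun_upd \<omega> k y) i = ons_increment \<omega> i" if "i \<le> k" for i k \<omega> y
    using that ons_iter_cong[of i "fun_upd \<omega> k y" \<omega>] by (intro ext) (simp add: ons_increment_def)
  show "(\<lambda>\<omega>. ons_increment \<omega> i (\<omega> i)) \<in> borel_measurable (PiM {1..m} (\<lambda>_. P))"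
    if "1 \<le> i" "i \<le> m" for i m
    using that by (intro ons_increment_measurable) auto
  show "ons_increment \<omega> i \<in> borel_measurable P" for i \<omega>
    unfolding ons_increment_def borel_measurable_P_iff
    by (intro borel_measurable_continuous_onI continuous_intros) (use R in simp)
  show "(\<integral>\<^sup>+ p. ennreal (exp (ons_increment \<omega> i p)) \<partial>P) \<le> 1" for i \<omega>
  proof -
    have "norm (ons_iter R \<eta>1 a l' \<omega> i - ws) \<le> 2 * R"
      using norm_triangle_ineq4[of "ons_iter R \<eta>1 a l' \<omega> i" ws]
        norm_ons_iter_le[OF less_imp_le[OF R], of \<eta>1 a l' \<omega> i] ws
      by linarith
    then show ?thesis
      unfolding ons_increment_def using nn_integral_exp_quadratic_deviation_le_1[of "2 * R"] R by simp
  qed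
qed

lemma ons_deviation_bound:
  "1 - exp (- t) \<le> measure (PiM {1..n} (\<lambda>_. P))
     {\<omega> \<in> space (PiM {1..n} (\<lambda>_. P)).
        (\<Sum>i=1..n. ((ons_iter R \<eta>1 a l' \<omega> i - ws) \<bullet> fst (\<omega> i))\<^sup>2
                    - Hnorm2 (second_moment P) (ons_iter R \<eta>1 a l' \<omega> i - ws))
        \<le> 8 * R\<^sup>2 * t + (\<Sum>i=1..n. Hnorm2 (second_moment P) (ons_iter R \<eta>1 a l' \<omega> i - ws))}"
  (is "_ \<le> measure ?Q {\<omega> \<in> _. ?\<Delta> \<omega> \<le> 8 * R\<^sup>2 * t + ?A \<omega>}")
proof -
  let ?S = "\<lambda>\<omega>. \<Sum>i=1..n. ons_increment \<omega> i (\<omega> i)"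
  interpret Q: prob_space ?Q by (intro prob_space_PiM prob_space_axioms)
  have [measurable]: "?S \<in> borel_measurable ?Q"
    by (intro borel_measurable_sum ons_increment_measurable) auto
  have S_eq: "?S \<omega> = (?\<Delta> \<omega> - ?A \<omega>) / (8 * R\<^sup>2)" for \<omega>
    unfolding ons_increment_def sum_subtractf[symmetric] sum_divide_distrib
    using R by (intro sum.cong) (auto simp: field_simps power_mult_distrib)
  have event_eq: "{\<omega> \<in> space ?Q. ?\<Delta> \<omega> \<le> 8 * R\<^sup>2 * t + ?A \<omega>} = {\<omega> \<in> space ?Q. ?S \<omega> \<le> t}"
    unfolding S_eq using R by (auto simp: divide_le_eq algebra_simps)
  have "Q.prob (space ?Q - {\<omega> \<in> space ?Q. t \<le> ?S \<omega>}) \<le> Q.prob {\<omega> \<in> space ?Q. ?S \<omega> \<le> t}"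
    by (rule Q.finite_measure_mono) (force, measurable)
  moreover have "Q.prob {\<omega> \<in> space ?Q. t \<le> ?S \<omega>} \<le> exp (- t)"
    using nn_integral_exp_sum_ons_increment_le_1 by (intro Q.prob_ge_le_exp_neg) measurable
  moreover have "{\<omega> \<in> space ?Q. t \<le> ?S \<omega>} \<in> Q.events" by measurable
  ultimately show ?thesis unfolding event_eq using Q.prob_compl by fastforce
qed

lemma sum_Hnorm2_ons_iter_le_if_le_1:
  assumes "n \<le> 1"
  shows "(\<Sum>i=1..n. Hnorm2 (second_moment P) (ons_iter R \<eta>1 a l' \<omega> i - ws)) \<le> 4 * R\<^sup>2 / real n"
proof (cases "n = 1")
  case True
  have "(\<Sum>i=1..n. Hnorm2 (second_moment P) (ons_iter R \<eta>1 a l' \<omega> i - ws)) \<le> (norm (- ws))\<^sup>2"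
    unfolding True using Hnorm2_second_moment_le[of "- ws"] by simp
  also have "\<dots> \<le> R\<^sup>2" using ws by (simp add: power_mono)
  also have "\<dots> \<le> 4 * R\<^sup>2 / real n" using True by simp
  finally show ?thesis .
qed (use assms in auto)

end

end

theorem lemma7:
  fixes P :: "((real^'d) \<times> real) measure"
    and n :: nat and R \<alpha> G \<eta>1 a t :: real
    and l l' :: "real \<Rightarrow> real"
    and wstar :: "real^'d"
  assumes P_prob: "prob_space P"
    and P_sets: "sets P = sets borel"
    and P_supp: "AE p in P. norm (fst p) \<le> 1 \<and> snd p \<in> {-1..1}"
    and R_pos: "R > 0"
    and l_nonneg: "\<forall>z. l z \<ge> 0"
    and l_convex: "convex_on UNIV l"
    and l_deriv: "\<forall>z. (l has_real_derivative l' z) (at z)"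
    and l_expconc: "\<alpha> > 0" "exp_concave_on \<alpha> {-R..R} l"
    and l_lip: "\<forall>z. \<bar>l' z\<bar> \<le> G"
    and wstar_in: "norm wstar \<le> R"
    and wstar_min: "\<forall>w. norm w \<le> R \<longrightarrow> exp_loss l P wstar \<le> exp_loss l P w"
    and eta_pos: "\<eta>1 > 0" and a_pos: "a > 0"
    and t_pos: "t > 0"
  shows "(let Q = PiM {1..n} (\<lambda>_. P);
              H = second_moment P;
              w = ons_iter R \<eta>1 a l';
              A = (\<lambda>\<omega>. \<Sum>i=1..n. Hnorm2 H (w \<omega> i - wstar));
              \<Delta>3 = (\<lambda>\<omega>. \<Sum>i=1..n. ((w \<omega> i - wstar) \<bullet> fst (\<omega> i))\<^sup>2
                                   - Hnorm2 H (w \<omega> i - wstar));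
              m = \<lceil>2 * log 2 (real n)\<rceil>
          in measure Q {\<omega> \<in> space Q. A \<omega> \<le> 4 * R\<^sup>2 / real n}
             + measure Q {\<omega> \<in> space Q. \<Delta>3 \<omega> \<le> 8 * R\<^sup>2 * t + A \<omega>}
             \<ge> 1 - real_of_int m * exp (- t))"
proof -
  interpret unit_ball_distribution P
    using P_prob P_sets P_supp
    by (intro unit_ball_distribution.intro unit_ball_distribution_axioms.intro) (auto elim: eventually_mono)
  interpret Q: prob_space "PiM {1..n} (\<lambda>_. P)" by (intro prob_space_PiM prob_space_axioms)
  have l': "l' \<in> borel_measurable borel" using l_deriv by (intro borel_measurable_derivative) auto
  let ?Q = "PiM {1..n} (\<lambda>_. P)"
  let ?A = "\<lambda>\<omega>. \<Sum>i=1..n. Hnorm2 (second_moment P) (ons_iter R \<eta>1 a l' \<omega> i - wstar)"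
  let ?m = "\<lceil>2 * log 2 (real n)\<rceil>"
  let ?\<Delta> = "\<lambda>\<omega>. \<Sum>i=1..n. ((ons_iter R \<eta>1 a l' \<omega> i - wstar) \<bullet> fst (\<omega> i))\<^sup>2
                    - Hnorm2 (second_moment P) (ons_iter R \<eta>1 a l' \<omega> i - wstar)"
  have deviation: "1 - exp (- t) \<le> Q.prob {\<omega> \<in> space ?Q. ?\<Delta> \<omega> \<le> 8 * R\<^sup>2 * t + ?A \<omega>}"
    by (rule ons_deviation_bound[OF R_pos a_pos l' wstar_in])
  have "1 - real_of_int ?m * exp (- t)
      \<le> Q.prob {\<omega> \<in> space ?Q. ?A \<omega> \<le> 4 * R\<^sup>2 / real n} + Q.prob {\<omega> \<in> space ?Q. ?\<Delta> \<omega> \<le> 8 * R\<^sup>2 * t + ?A \<omega>}"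
  proof (cases "n \<ge> 2")
    case True
    then have "1 \<le> log 2 (real n)" by (subst le_log_iff) auto
    then have "exp (- t) \<le> real_of_int ?m * exp (- t)" by simp
    moreover have "0 \<le> Q.prob {\<omega> \<in> space ?Q. ?A \<omega> \<le> 4 * R\<^sup>2 / real n}" by (rule measure_nonneg)
    ultimately show ?thesis using deviation by linarith
  next
    case False
    then have "n \<le> 1" by simp
    then have "?m = 0" by (auto simp: le_Suc_eq log_def)
    moreover have "{\<omega> \<in> space ?Q. ?A \<omega> \<le> 4 * R\<^sup>2 / real n} = space ?Q"
      using sum_Hnorm2_ons_iter_le_if_le_1[OF R_pos a_pos l' wstar_in \<open>n \<le> 1\<close>] by auto
    ultimately show ?thesis using Q.prob_space measure_nonneg by simp
  qed
  then show ?thesis by (simp add: Let_def)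
qed

end
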